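(* Let $0.5<\bar P\le1$, $\epsilon>0$, $\omega\ge0$, $\gamma_0\ge\gamma\ge0$. Let $\omega(t),\epsilon_x(t),\epsilon_y(t),\delta\gamma_t$ be real-valued functions of time with $|\omega(t)|\le\omega$, $\sqrt{\epsilon_x^2(t)+\epsilon_y^2(t)}\le\epsilon$, $|\delta\gamma_t|\le\gamma$, and set $H(t)=[1+\omega(t)]I_z+\epsilon_x(t)I_x+\epsilon_y(t)I_y$, $\gamma_t=\gamma_0+\delta\gamma_t$. Let the qubit density matrix $\rho_t$ evolve according to $$\dot\rho_t=-i[H(t),\rho_t]+\gamma_t(\sigma_x\rho_t\sigma_x-\rho_t)+\gamma_t(\sigma_y\rho_t\sigma_y-\rho_t)+\gamma_t(\sigma_z\rho_t\sigma_z-\rho_t)$$ from an initial state with $\mathrm{tr}(\rho_0^2)=1$. Let $T_d=-\frac{\ln(2\bar P-1)}{8(\gamma_0+\gamma)}$. Then for every $t\in[0,T_d]$, $\rho_t\in\mathcal{D}_d=\{\rho:\mathrm{tr}(\rho^2)\ge\bar P\}$. Consequently, if projective measurements of $\sigma_z$ are performed periodically with period $T_d$, the state remains in $\mathcal{D}_d$.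
   Context: $\sigma_x,\sigma_y,\sigma_z$ are the Pauli matrices $\begin{pmatrix}0&1\\1&0\end{pmatrix},\begin{pmatrix}0&-i\\i&0\end{pmatrix},\begin{pmatrix}1&0\\0&-1\end{pmatrix}$, $I_j=\frac12\sigma_j$, $[A,B]=AB-BA$, units with $\hbar=1$. The purity of $\rho$ is $\mathrm{tr}(\rho^2)$. *)

theory Defs
  imports "HOL-Analysis.Analysis"
begin

type_synonym qmat = "complex^2^2"

definition sigma_x :: qmat where
  "sigma_x = (\<chi> i j. if i = j then 0 else 1)"

definition sigma_y :: qmat where
  "sigma_y = (\<chi> i j. if i = j then 0 else if i = 0 then - \<i> else \<i>)"

definition sigma_z :: qmat where
  "sigma_z = (\<chi> i j. if i \<noteq> j then 0 else if i = 0 then 1 else -1)"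

definition I_x :: qmat where "I_x = (1/2) *\<^sub>R sigma_x"
definition I_y :: qmat where "I_y = (1/2) *\<^sub>R sigma_y"
definition I_z :: qmat where "I_z = (1/2) *\<^sub>R sigma_z"

definition cscale :: "complex \<Rightarrow> qmat \<Rightarrow> qmat" where
  "cscale c M = (\<chi> i j. c * M $ i $ j)"

definition commutator :: "qmat \<Rightarrow> qmat \<Rightarrow> qmat" where
  "commutator A B = A ** B - B ** A"

definition hermitian :: "qmat \<Rightarrow> bool" where
  "hermitian M \<longleftrightarrow> (\<forall>i j. M $ i $ j = cnj (M $ j $ i))"

definition psd :: "qmat \<Rightarrow> bool" where
  "psd M \<longleftrightarrow> (\<forall>v :: complex^2.
     let q = (\<Sum>i\<in>UNIV. \<Sum>j\<in>UNIV. cnj (v $ i) * M $ i $ j * v $ j) in Im q = 0 \<and> Re q \<ge> 0)"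

definition density_matrix :: "qmat \<Rightarrow> bool" where
  "density_matrix M \<longleftrightarrow> hermitian M \<and> psd M \<and> trace M = 1"

text \<open>Purity tr(rho^2); real for Hermitian rho, we take the real part.\<close>
definition purity :: "qmat \<Rightarrow> real" where
  "purity M = Re (trace (M ** M))"

definition hamiltonian :: "real \<Rightarrow> real \<Rightarrow> real \<Rightarrow> qmat" where
  "hamiltonian w ex ey = (1 + w) *\<^sub>R I_z + ex *\<^sub>R I_x + ey *\<^sub>R I_y"

definition lindblad_rhs :: "qmat \<Rightarrow> real \<Rightarrow> qmat \<Rightarrow> qmat" where
  "lindblad_rhs H g rho =
     cscale (- \<i>) (commutator H rho)
     + g *\<^sub>R (sigma_x ** rho ** sigma_x - rho)
     + g *\<^sub>R (sigma_y ** rho ** sigma_y - rho)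
     + g *\<^sub>R (sigma_z ** rho ** sigma_z - rho)"

definition D_d :: "real \<Rightarrow> qmat set" where
  "D_d Pbar = {rho. purity rho \<ge> Pbar}"

end

theory Submission
  imports Defs
begin

text \<open>
  The three Pauli dissipators together map \<open>\<rho>\<close> to \<open>2 tr(\<rho>) 1 - 4\<rho>\<close>, so the trace is conserved
  and, with \<open>tr \<rho> = 1\<close> and \<open>tr(\<rho>[H,\<rho>]) = 0\<close>, the purity obeys
  \<open>d/dt (tr \<rho>\<^sup>2 - 1/2) = -8\<gamma>\<^sub>t (tr \<rho>\<^sup>2 - 1/2)\<close>, independently of the Hamiltonian.
  Since \<open>\<gamma>\<^sub>t \<le> \<gamma>\<^sub>0 + \<gamma>\<close>, comparison with the exponential gives
  \<open>tr \<rho>\<^sub>t\<^sup>2 - 1/2 \<ge> exp(-8(\<gamma>\<^sub>0 + \<gamma>)t)/2\<close>, which is at least \<open>P\<^sub>b\<^sub>a\<^sub>r - 1/2\<close> up to \<open>T\<^sub>d\<close>.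
\<close>

lemma lindblad_rhs_entry:
  fixes H M :: qmat
  shows "lindblad_rhs H g M $ i $ j =
    - \<i> * commutator H M $ i $ j
    + complex_of_real g * ((if i = j then 2 * trace M else 0) - 4 * M $ i $ j)"
  using exhaust_2[of i] exhaust_2[of j]
  by (auto simp: lindblad_rhs_def cscale_def sigma_x_def sigma_y_def sigma_z_def
      matrix_matrix_mult_def sum_2 trace_def algebra_simps)
     (auto simp: scaleR_conv_of_real algebra_simps)

lemma trace_lindblad_rhs:
  fixes H M :: qmat
  shows "trace (lindblad_rhs H g M) = 0"
  by (simp add: trace_def sum_2 lindblad_rhs_entry commutator_def matrix_matrix_mult_def
      algebra_simps)

lemma trace_mult_lindblad_rhs:
  fixes H M :: qmat
  shows "trace (M ** lindblad_rhs H g M) = g * (2 * (trace M)\<^sup>2 - 4 * trace (M ** M))"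
  by (simp add: trace_def sum_2 lindblad_rhs_entry commutator_def matrix_matrix_mult_def
      algebra_simps power2_eq_square)

lemma has_vector_derivative_matrix_entry:
  fixes f :: "real \<Rightarrow> qmat"
  assumes "(f has_vector_derivative D) F"
  shows "((\<lambda>t. f t $ i $ j) has_vector_derivative D $ i $ j) F"
  using bounded_linear.has_vector_derivative
      [OF bounded_linear_compose[OF bounded_linear_vec_nth bounded_linear_vec_nth] assms] .

lemma has_vector_derivative_trace:
  fixes f :: "real \<Rightarrow> qmat"
  assumes "(f has_vector_derivative D) F"
  shows "((\<lambda>t. trace (f t)) has_vector_derivative trace D) F"
proof -
  have "((\<lambda>t. f t $ 1 $ 1 + f t $ 2 $ 2) has_vector_derivative D $ 1 $ 1 + D $ 2 $ 2) F"
    by (intro has_vector_derivative_add has_vector_derivative_matrix_entry assms)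
  then show ?thesis
    by (simp add: trace_def sum_2)
qed

lemma has_real_derivative_purity:
  fixes f :: "real \<Rightarrow> qmat"
  assumes "(f has_vector_derivative D) (at x within S)"
  shows "((\<lambda>t. purity (f t)) has_real_derivative 2 * Re (trace (f x ** D))) (at x within S)"
proof -
  let ?e = "\<lambda>i j. f x $ i $ j" and ?d = "\<lambda>i j. D $ i $ j"
  have "((\<lambda>t. f t $ 1 $ 1 * f t $ 1 $ 1 + f t $ 1 $ 2 * f t $ 2 $ 1
              + f t $ 2 $ 1 * f t $ 1 $ 2 + f t $ 2 $ 2 * f t $ 2 $ 2)
     has_vector_derivative
       (?e 1 1 * ?d 1 1 + ?d 1 1 * ?e 1 1) + (?e 1 2 * ?d 2 1 + ?d 1 2 * ?e 2 1)
     + (?e 2 1 * ?d 1 2 + ?d 2 1 * ?e 1 2) + (?e 2 2 * ?d 2 2 + ?d 2 2 * ?e 2 2))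
     (at x within S)"
    by (intro has_vector_derivative_add has_vector_derivative_mult
        has_vector_derivative_matrix_entry assms)
  from bounded_linear.has_vector_derivative[OF bounded_linear_Re this]
  show ?thesis
    unfolding has_real_derivative_iff_has_vector_derivative
    by (simp add: purity_def trace_def sum_2 matrix_matrix_mult_def algebra_simps)
qed

text \<open>Working with \<open>f\<^sup>2\<close> avoids knowing the sign of \<open>f\<close> in advance; positivity of \<open>f\<close>
  then follows from the intermediate value theorem.\<close>

lemma square_exp_weighted_mono:
  fixes f k :: "real \<Rightarrow> real"
  assumes deriv: "\<And>s. t0 \<le> s \<Longrightarrow> (f has_real_derivative - k s * f s) (at s within {t0..})"
    and bound: "\<And>s. t0 \<le> s \<Longrightarrow> k s \<le> C"
    and "t0 \<le> t"
  shows "(f t0)\<^sup>2 \<le> (f t)\<^sup>2 * exp (2 * C * (t - t0))"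
proof -
  define h where "h s = (f s)\<^sup>2 * exp (2 * C * (s - t0))" for s
  have hder: "(h has_real_derivative 2 * (C - k s) * (f s)\<^sup>2 * exp (2 * C * (s - t0)))
      (at s within {t0..})" if "t0 \<le> s" for s
    unfolding h_def
    by (rule derivative_eq_intros deriv[OF that] refl | simp)+
       (simp add: algebra_simps power2_eq_square)
  have "h t0 \<le> h t"
  proof (rule DERIV_nonneg_imp_increasing_open[OF \<open>t0 \<le> t\<close>])
    fix x assume x: "t0 < x" "x < t"
    have "(h has_real_derivative 2 * (C - k x) * (f x)\<^sup>2 * exp (2 * C * (x - t0)))
        (at x within {t0<..})"
      using hder[of x] x by (rule_tac DERIV_subset) auto
    then have "(h has_real_derivative 2 * (C - k x) * (f x)\<^sup>2 * exp (2 * C * (x - t0))) (at x)"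
      using at_within_open[of x "{t0<..}"] x by simp
    moreover have "0 \<le> 2 * (C - k x) * (f x)\<^sup>2 * exp (2 * C * (x - t0))"
      using bound[of x] x by (intro mult_nonneg_nonneg) auto
    ultimately show "\<exists>y. (h has_real_derivative y) (at x) \<and> 0 \<le> y"
      by blast
  next
    have "continuous_on {t0..} h"
      using hder by (intro DERIV_continuous_on) auto
    then show "continuous_on {t0..t} h"
      by (rule continuous_on_subset) auto
  qed
  then show ?thesis
    by (simp add: h_def)
qed

lemma linear_decay_lower_bound:
  fixes f k :: "real \<Rightarrow> real"
  assumes deriv: "\<And>s. t0 \<le> s \<Longrightarrow> (f has_real_derivative - k s * f s) (at s within {t0..})"
    and bound: "\<And>s. t0 \<le> s \<Longrightarrow> k s \<le> C"
    and pos: "0 < f t0" and "t0 \<le> t"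
  shows "f t0 * exp (- C * (t - t0)) \<le> f t"
proof -
  have square_weighted: "(f t0)\<^sup>2 \<le> (f s)\<^sup>2 * exp (2 * C * (s - t0))" if "t0 \<le> s" for s
    using deriv bound that by (rule square_exp_weighted_mono)
  have nonzero: "f s \<noteq> 0" if "t0 \<le> s" for s
    using square_weighted[OF that] pos by auto
  have "continuous_on {t0..} f"
    using deriv by (intro DERIV_continuous_on) auto
  then have "continuous_on {t0..t} f"
    by (rule continuous_on_subset) auto
  then have ft: "0 < f t"
    using IVT2'[of f t 0 t0] \<open>t0 \<le> t\<close> pos nonzero by force
  have "(f t0 * exp (- C * (t - t0)))\<^sup>2 = (f t0)\<^sup>2 * exp (- 2 * C * (t - t0))"
    by (simp add: power_mult_distrib power2_eq_square flip: exp_add)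
  also have "\<dots> \<le> (f t)\<^sup>2 * exp (2 * C * (t - t0)) * exp (- 2 * C * (t - t0))"
    using mult_right_mono[OF square_weighted[OF \<open>t0 \<le> t\<close>] exp_ge_zero] .
  also have "\<dots> = (f t)\<^sup>2"
    by (simp flip: exp_add)
  finally show ?thesis
    using ft by (simp add: power2_le_iff_abs_le)
qed

lemma lindblad_trace_conserved:
  fixes rho :: "real \<Rightarrow> qmat"
  assumes "\<And>s. t0 \<le> s \<Longrightarrow>
      (rho has_vector_derivative lindblad_rhs (H s) (g s) (rho s)) (at s within {t0..})"
    and "t0 \<le> t"
  shows "trace (rho t) = trace (rho t0)"
proof -
  obtain c where "\<And>s. s \<in> {t0..} \<Longrightarrow> trace (rho s) = c"
  proof (rule has_vector_derivative_zero_constant[of "{t0..}" "\<lambda>s. trace (rho s)"])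
    fix s :: real assume "s \<in> {t0..}"
    from has_vector_derivative_trace[OF assms(1)] this
    show "((\<lambda>s. trace (rho s)) has_vector_derivative 0) (at s within {t0..})"
      by (simp add: trace_lindblad_rhs)
  qed (auto simp: convex_real_interval)
  then show ?thesis
    using \<open>t0 \<le> t\<close> by simp
qed

lemma lindblad_purity_deriv:
  fixes rho :: "real \<Rightarrow> qmat"
  assumes "(rho has_vector_derivative lindblad_rhs H g (rho s)) (at s within S)"
    and "trace (rho s) = 1"
  shows "((\<lambda>t. purity (rho t) - 1/2) has_real_derivative - (8 * g) * (purity (rho s) - 1/2))
      (at s within S)"
proof -
  have "((\<lambda>t. purity (rho t) - 1/2) has_real_derivative
      2 * Re (trace (rho s ** lindblad_rhs H g (rho s))) - 0) (at s within S)"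
    by (intro derivative_intros has_real_derivative_purity assms(1))
  then show ?thesis
    using assms(2) by (simp add: trace_mult_lindblad_rhs purity_def algebra_simps)
qed

theorem theorem5:
  fixes Pbar eps omega gamma0 gamma t0 :: real
    and om ex ey dg :: "real \<Rightarrow> real"
    and rho :: "real \<Rightarrow> qmat"
  assumes "1/2 < Pbar" and "Pbar \<le> 1"
    and "eps > 0" and "omega \<ge> 0" and "gamma0 \<ge> gamma" and "gamma \<ge> 0"
    and "\<And>t. \<bar>om t\<bar> \<le> omega"
    and "\<And>t. sqrt ((ex t)\<^sup>2 + (ey t)\<^sup>2) \<le> eps"
    and "\<And>t. \<bar>dg t\<bar> \<le> gamma"
    and "\<And>t. t \<ge> t0 \<Longrightarrow>
           (rho has_vector_derivative
              lindblad_rhs (hamiltonian (om t) (ex t) (ey t)) (gamma0 + dg t) (rho t))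
           (at t within {t0..})"
    and "density_matrix (rho t0)" and "purity (rho t0) = 1"
  shows "\<forall>t. t0 \<le> t \<and> 8 * (gamma0 + gamma) * (t - t0) \<le> - ln (2 * Pbar - 1)
           \<longrightarrow> rho t \<in> D_d Pbar"
proof (intro allI impI)
  fix t assume t: "t0 \<le> t \<and> 8 * (gamma0 + gamma) * (t - t0) \<le> - ln (2 * Pbar - 1)"
  have trace1: "trace (rho s) = 1" if "t0 \<le> s" for s
    using lindblad_trace_conserved[OF assms(10) that] assms(11) by (simp add: density_matrix_def)
  have purity_deriv: "((\<lambda>s. purity (rho s) - 1/2) has_real_derivative
      - (8 * (gamma0 + dg s)) * (purity (rho s) - 1/2)) (at s within {t0..})" if "t0 \<le> s" for s
    using assms(10)[OF that] trace1[OF that] by (rule lindblad_purity_deriv)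
  have rate_bound: "8 * (gamma0 + dg s) \<le> 8 * (gamma0 + gamma)" for s
    using assms(9)[of s] by (simp add: abs_le_iff)
  have "1/2 * exp (- (8 * (gamma0 + gamma)) * (t - t0)) \<le> purity (rho t) - 1/2"
    using linear_decay_lower_bound[OF purity_deriv rate_bound] assms(12) t by simp
  moreover have "2 * Pbar - 1 \<le> exp (- (8 * (gamma0 + gamma)) * (t - t0))"
    using t assms(1) by (subst ln_le_cancel_iff[symmetric]) (auto simp: algebra_simps)
  ultimately show "rho t \<in> D_d Pbar"
    by (simp add: D_d_def)
qed

end
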